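(* Let $\kappa>0$ and let $Z=(Z_t)_{t\ge0}$ be a $\kappa$-self-similar Markov process with transition function $P$. Let $0<s\le t\le u$, $a,b\in[0,1]$ and let $B$ be a measurable set. Then \[ \int P(0,s,0,\mathrm{d}x)\, P\bigl(at,t,(at/s)^{\kappa}x,B\bigr) = P(0,t,0,B) \] and \[ \int P\bigl(at,t,(at/s)^{\kappa}x,\mathrm{d}y\bigr)\, P\bigl(bu,u,(bu/t)^{\kappa}y,B\bigr) = P\bigl(abu,u,(abu/s)^{\kappa}x,B\bigr) \] (the second identity holding for every $x$).
   Context: A real-valued càdlàg Markov process $Z=(Z_t)_{t\ge0}$ (Markov with respect to its natural filtration) is $\kappa$-self-similar if $(Z_{ct})_{t\ge0}$ and $(c^\kappa Z_t)_{t\ge0}$ have the same finite-dimensional distributions for every $c>0$; in particular $Z_0=0$. Its transition function is $P(s,t,x,\mathrm{d}y)=\mathbb{P}(Z_t\in\mathrm{d}y\mid Z_s=x)$, $s\le t$. Self-similarity gives the scaling property $P(cs,ct,c^\kappa x,c^\kappa\,\mathrm{d}y)=P(s,t,x,\mathrm{d}y)$ for all $c>0$, $s\le t$, $x$, where for a measure $M$ and $c>0$ the measure $M(c\,\mathrm{d}y)$ is defined by $\int g(y)M(c\,\mathrm{d}y)=\int g(y/c)M(\mathrm{d}y)$. *)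

theory Defs
  imports "HOL-Probability.Probability"
begin

definition nat_filt :: "'a measure \<Rightarrow> (real \<Rightarrow> 'a \<Rightarrow> real) \<Rightarrow> real \<Rightarrow> 'a measure" where
  "nat_filt M Z s = sigma (space M) {Z r -` A \<inter> space M | r A. r \<in> {0..s} \<and> A \<in> sets borel}"

definition cadlag_paths :: "'a measure \<Rightarrow> (real \<Rightarrow> 'a \<Rightarrow> real) \<Rightarrow> bool" where
  "cadlag_paths M Z \<longleftrightarrow> (\<forall>\<omega>\<in>space M. \<forall>t\<ge>0.
      continuous (at_right t) (\<lambda>r. Z r \<omega>) \<and>
      (t > 0 \<longrightarrow> (\<exists>l. ((\<lambda>r. Z r \<omega>) \<longlongrightarrow> l) (at_left t))))"

definition self_similar :: "'a measure \<Rightarrow> real \<Rightarrow> (real \<Rightarrow> 'a \<Rightarrow> real) \<Rightarrow> bool" where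
  "self_similar M \<kappa> Z \<longleftrightarrow> (\<forall>c>0. \<forall>J. finite J \<and> J \<subseteq> {0..} \<longrightarrow>
      distr M (PiM J (\<lambda>_. borel)) (\<lambda>\<omega>. \<lambda>j\<in>J. Z (c * j) \<omega>) =
      distr M (PiM J (\<lambda>_. borel)) (\<lambda>\<omega>. \<lambda>j\<in>J. c powr \<kappa> * Z j \<omega>))"

definition transition_function :: "(real \<Rightarrow> real \<Rightarrow> real \<Rightarrow> real measure) \<Rightarrow> bool" where
  "transition_function P \<longleftrightarrow>
     (\<forall>s t x. 0 \<le> s \<and> s \<le> t \<longrightarrow> prob_space (P s t x) \<and> sets (P s t x) = sets borel) \<and>
     (\<forall>s t B. 0 \<le> s \<and> s \<le> t \<and> B \<in> sets borel \<longrightarrow>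
        (\<lambda>x. emeasure (P s t x) B) \<in> borel_measurable borel) \<and>
     (\<forall>s x. 0 \<le> s \<longrightarrow> P s s x = return borel x) \<and>
     (\<forall>s t u x B. 0 \<le> s \<and> s \<le> t \<and> t \<le> u \<and> B \<in> sets borel \<longrightarrow>
        emeasure (P s u x) B = (\<integral>\<^sup>+ y. emeasure (P t u y) B \<partial>(P s t x)))"

definition markov_with_transition ::
  "'a measure \<Rightarrow> (real \<Rightarrow> 'a \<Rightarrow> real) \<Rightarrow> (real \<Rightarrow> real \<Rightarrow> real \<Rightarrow> real measure) \<Rightarrow> bool" where
  "markov_with_transition M Z P \<longleftrightarrow> transition_function P \<and>
     (\<forall>s t B. 0 \<le> s \<and> s \<le> t \<and> B \<in> sets borel \<longrightarrow>
        (AE \<omega> in M. real_cond_exp M (nat_filt M Z s) (\<lambda>\<omega>. indicator B (Z t \<omega>)) \<omega>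
                     = measure (P s t (Z s \<omega>)) B))"

text \<open>Scaling property of the transition function:
  P(cs,ct,c^kappa x, c^kappa dy) = P(s,t,x,dy), where M(c dy) is the image of M under y \<mapsto> y/c.\<close>
definition scaling_property :: "real \<Rightarrow> (real \<Rightarrow> real \<Rightarrow> real \<Rightarrow> real measure) \<Rightarrow> bool" where
  "scaling_property \<kappa> P \<longleftrightarrow> (\<forall>c s t x. c > 0 \<and> 0 \<le> s \<and> s \<le> t \<longrightarrow>
      distr (P (c * s) (c * t) (c powr \<kappa> * x)) borel (\<lambda>y. y / c powr \<kappa>) = P s t x)"

end

theory Submission
  imports Defs
begin

text \<open>The scaling property moves the time interval [s,t] to [cs,ct] at the cost of rescaling
  space by c powr \<kappa>; for c = at/s and c = bu/t this turns both integrals into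
  Chapman-Kolmogorov integrals, which collapse to a single transition probability.\<close>

lemma transition_functionD:
  assumes "transition_function P" and "0 \<le> s" "s \<le> t"
  shows transition_function_prob_space: "prob_space (P s t x)"
    and transition_function_sets: "sets (P s t x) = sets borel"
    and transition_function_measurable:
      "B \<in> sets borel \<Longrightarrow> (\<lambda>x. emeasure (P s t x) B) \<in> borel_measurable borel"
    and transition_function_chapman_kolmogorov:
      "t \<le> u \<Longrightarrow> B \<in> sets borel \<Longrightarrow>
        emeasure (P s u x) B = (\<integral>\<^sup>+ y. emeasure (P t u y) B \<partial>(P s t x))"
  using assms unfolding transition_function_def by auto

lemma nn_integral_transition_rescale:
  assumes tf: "transition_function P" and sc: "scaling_property \<kappa> P"
    and "c > 0" "0 \<le> s" "s \<le> t" and g: "g \<in> borel_measurable borel"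
  shows "(\<integral>\<^sup>+ y. g (c powr \<kappa> * y) \<partial>(P s t x))
       = (\<integral>\<^sup>+ y. g y \<partial>(P (c * s) (c * t) (c powr \<kappa> * x)))"
proof -
  let ?N = "P (c * s) (c * t) (c powr \<kappa> * x)"
  have distr_N: "P s t x = distr ?N borel (\<lambda>y. y / c powr \<kappa>)"
    using sc assms(3-5) unfolding scaling_property_def by simp
  have "sets ?N = sets borel"
    using assms(3-5) by (intro transition_function_sets[OF tf]) auto
  then have "(\<lambda>y. y / c powr \<kappa>) \<in> measurable ?N borel"
    unfolding measurable_cong_sets[OF \<open>sets ?N = sets borel\<close> refl] by simp
  moreover have "(\<lambda>y. g (c powr \<kappa> * y)) \<in> borel_measurable borel"
    using g by simp
  ultimately have "(\<integral>\<^sup>+ y. g (c powr \<kappa> * y) \<partial>(P s t x))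
           = (\<integral>\<^sup>+ y. g (c powr \<kappa> * (y / c powr \<kappa>)) \<partial>?N)"
    unfolding distr_N by (simp add: nn_integral_distr)
  also have "\<dots> = (\<integral>\<^sup>+ y. g y \<partial>?N)"
    using \<open>c > 0\<close> by simp
  finally show ?thesis .
qed

lemma chapman_kolmogorov_rescaled:
  assumes tf: "transition_function P" and sc: "scaling_property \<kappa> P"
    and "0 \<le> c" "0 \<le> r" "r \<le> s" "c * s \<le> u" and B: "B \<in> sets borel"
  shows "(\<integral>\<^sup>+ y. emeasure (P (c * s) u (c powr \<kappa> * y)) B \<partial>(P r s x))
       = emeasure (P (c * r) u (c powr \<kappa> * x)) B"
proof (cases "c = 0")
  case True
  then show ?thesis
    using transition_function_prob_space[OF tf \<open>0 \<le> r\<close> \<open>r \<le> s\<close>]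
    by (simp add: prob_space.emeasure_space_1)
next
  case False
  with assms(3) have "c > 0" by simp
  have "c * r \<le> c * s" "0 \<le> c * s"
    using assms(3-5) by (auto intro: mult_left_mono)
  have "(\<integral>\<^sup>+ y. emeasure (P (c * s) u (c powr \<kappa> * y)) B \<partial>(P r s x))
      = (\<integral>\<^sup>+ y. emeasure (P (c * s) u y) B \<partial>(P (c * r) (c * s) (c powr \<kappa> * x)))"
    using assms(4-6) \<open>c > 0\<close> \<open>0 \<le> c * s\<close>
    by (intro nn_integral_transition_rescale[OF tf sc] transition_function_measurable[OF tf _ _ B])
  also have "\<dots> = emeasure (P (c * r) u (c powr \<kappa> * x)) B"
    using assms(3,4,6) \<open>c * r \<le> c * s\<close>
    by (intro transition_function_chapman_kolmogorov[OF tf, symmetric] B) auto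
  finally show ?thesis .
qed

theorem lemma2p1:
  fixes M :: "'a measure" and Z :: "real \<Rightarrow> 'a \<Rightarrow> real"
    and P :: "real \<Rightarrow> real \<Rightarrow> real \<Rightarrow> real measure"
    and \<kappa> s t u a b :: real and B :: "real set"
  assumes "\<kappa> > 0"
    and "prob_space M"
    and "\<forall>t\<ge>0. Z t \<in> borel_measurable M"
    and "cadlag_paths M Z"
    and "self_similar M \<kappa> Z"
    and "markov_with_transition M Z P"
    and "scaling_property \<kappa> P"
    and "0 < s" "s \<le> t" "t \<le> u"
    and "a \<in> {0..1}" "b \<in> {0..1}"
    and "B \<in> sets borel"
  shows "((\<integral>\<^sup>+ x. emeasure (P (a * t) t ((a * t / s) powr \<kappa> * x)) B \<partial>(P 0 s 0))
           = emeasure (P 0 t 0) B)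
       \<and> (\<forall>x. (\<integral>\<^sup>+ y. emeasure (P (b * u) u ((b * u / t) powr \<kappa> * y)) B
                  \<partial>(P (a * t) t ((a * t / s) powr \<kappa> * x)))
           = emeasure (P (a * b * u) u ((a * b * u / s) powr \<kappa> * x)) B)"
proof -
  have tf: "transition_function P"
    using \<open>markov_with_transition M Z P\<close> unfolding markov_with_transition_def by simp
  note rescaled = chapman_kolmogorov_rescaled[OF tf \<open>scaling_property \<kappa> P\<close> _ _ _ _ \<open>B \<in> sets borel\<close>]
  have "0 \<le> a" "a \<le> 1" "0 \<le> b" "b \<le> 1" "0 < t"
    using assms(8-12) by auto
  then have "a * t \<le> t" "b * u \<le> u" "0 \<le> a * t" "0 \<le> a * t / s" "0 \<le> b * u / t"
    using assms(8-10) by (auto simp: mult_left_le_one_le)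
  have time_a: "(a * t / s) * s = a * t" and time_b: "(b * u / t) * t = b * u"
    and time_ab: "(b * u / t) * (a * t) = a * b * u"
    using \<open>0 < s\<close> \<open>0 < t\<close> by (simp_all add: field_simps)
  have space_ab: "(b * u / t) powr \<kappa> * ((a * t / s) powr \<kappa> * x) = (a * b * u / s) powr \<kappa> * x"
    for x
  proof -
    have "(b * u / t) * (a * t / s) = a * b * u / s"
      using \<open>0 < t\<close> by (simp add: field_simps)
    then show ?thesis by (metis powr_mult mult.assoc)
  qed
  have "(\<integral>\<^sup>+ x. emeasure (P (a * t) t ((a * t / s) powr \<kappa> * x)) B \<partial>(P 0 s 0))
      = emeasure (P 0 t 0) B"
    using rescaled[where c = "a * t / s" and r = 0 and s = s and u = t and x = 0, unfolded time_a]
      \<open>0 \<le> a * t / s\<close> \<open>0 < s\<close> \<open>a * t \<le> t\<close>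
    by simp
  moreover have "(\<integral>\<^sup>+ y. emeasure (P (b * u) u ((b * u / t) powr \<kappa> * y)) B
                  \<partial>(P (a * t) t ((a * t / s) powr \<kappa> * x)))
      = emeasure (P (a * b * u) u ((a * b * u / s) powr \<kappa> * x)) B" for x
    using \<open>0 \<le> b * u / t\<close> \<open>0 \<le> a * t\<close> \<open>a * t \<le> t\<close> \<open>b * u \<le> u\<close>
    by (rule rescaled[where c = "b * u / t" and r = "a * t" and s = t and u = u
          and x = "(a * t / s) powr \<kappa> * x", unfolded time_b time_ab space_ab])
  ultimately show ?thesis by blast
qed

end
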